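(* Let $p\ge1$, $n>1$ be integers, $\mathcal E,\mathcal F$ Hilbert spaces, and for $i=1,\ldots,n-1$ let $\Phi_i(z)=\sum_{\ell=0}^pA_\ell^{(i)}z^\ell\in H^\infty\mathcal L(\mathcal E)$ and $\tilde\Phi_i(z)=\sum_{\ell=0}^p\tilde A_\ell^{(i)}z^\ell\in H^\infty\mathcal L(\mathcal F)$ with $A_\ell^{(i)}\in\mathcal L(\mathcal E)$, $\tilde A_\ell^{(i)}\in\mathcal L(\mathcal F)$. Then the $n$-tuple $(T_{\Phi_1},\dots,T_{\Phi_{n-1}},T_z)$ on $H^2(\mathcal E)$ is unitarily equivalent to the $n$-tuple $(T_{\tilde\Phi_1},\dots,T_{\tilde\Phi_{n-1}},T_z)$ on $H^2(\mathcal F)$ if and only if the tuples $(A_\ell^{(i)})_{i=1,\ell=0}^{n-1,p}$ and $(\tilde A_\ell^{(i)})_{i=1,\ell=0}^{n-1,p}$ are unitarily equivalent, i.e. there is a unitary $W:\mathcal E\to\mathcal F$ with $WA_\ell^{(i)}W^*=\tilde A_\ell^{(i)}$ for all $i,\ell$.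
   Context: $H^2(\mathcal E)$ is the $\mathcal E$-valued Hardy space on $\mathbb D$, $H^\infty\mathcal L(\mathcal E)$ the bounded analytic $\mathcal L(\mathcal E)$-valued functions on $\mathbb D$, $T_\Phi$ the multiplication operator $f\mapsto\Phi f$ on $H^2(\mathcal E)$, and $T_z$ the unilateral shift. Unitary equivalence of operator tuples means a single unitary intertwines all corresponding entries. *)

theory Defs
  imports "HOL-Analysis.Analysis"
begin

class complex_hilbert = banach +
  fixes scaleC :: "complex \<Rightarrow> 'a \<Rightarrow> 'a" (infixr \<open>*\<^sub>C\<close> 75)
    and cinner :: "'a \<Rightarrow> 'a \<Rightarrow> complex"
  assumes scaleC_add_right: "a *\<^sub>C (x + y) = a *\<^sub>C x + a *\<^sub>C y"
    and scaleC_add_left: "(a + b) *\<^sub>C x = a *\<^sub>C x + b *\<^sub>C x"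
    and scaleC_scaleC: "a *\<^sub>C (b *\<^sub>C x) = (a * b) *\<^sub>C x"
    and scaleC_one: "1 *\<^sub>C x = x"
    and scaleR_scaleC: "scaleR r x = complex_of_real r *\<^sub>C x"
    and cinner_add_right: "cinner x (y + z) = cinner x y + cinner x z"
    and cinner_scaleC_right: "cinner x (a *\<^sub>C y) = a * cinner x y"
    and cinner_commute: "cinner y x = cnj (cinner x y)"
    and cinner_self_norm: "cinner x x = complex_of_real ((norm x)\<^sup>2)"

definition bounded_clinear :: "('a::complex_hilbert \<Rightarrow> 'b::complex_hilbert) \<Rightarrow> bool" where
  "bounded_clinear T \<longleftrightarrow>
     (\<forall>x y. T (x + y) = T x + T y) \<and> (\<forall>c x. T (c *\<^sub>C x) = c *\<^sub>C T x) \<and>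
     (\<exists>K. \<forall>x. norm (T x) \<le> K * norm x)"

definition cadjoint :: "('a::complex_hilbert \<Rightarrow> 'b::complex_hilbert) \<Rightarrow> 'b \<Rightarrow> 'a" where
  "cadjoint T = (\<lambda>y. THE x. \<forall>z. cinner (T z) y = cinner z x)"

definition unitary :: "('a::complex_hilbert \<Rightarrow> 'b::complex_hilbert) \<Rightarrow> bool" where
  "unitary W \<longleftrightarrow> bounded_clinear W \<and> surj W \<and> (\<forall>x y. cinner (W x) (W y) = cinner x y)"

definition sq_summable :: "(nat \<Rightarrow> 'a::complex_hilbert) \<Rightarrow> bool" where
  "sq_summable c \<longleftrightarrow> summable (\<lambda>n. (norm (c n))\<^sup>2)"

definition power_ser :: "(nat \<Rightarrow> 'a::complex_hilbert) \<Rightarrow> complex \<Rightarrow> 'a" where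
  "power_ser c z = (\<Sum>n. (z ^ n) *\<^sub>C c n)"

definition hardy2 :: "(complex \<Rightarrow> 'a::complex_hilbert) set" where
  "hardy2 = {f. \<exists>c. sq_summable c \<and>
                   (\<forall>z. f z = (if norm z < 1 then power_ser c z else 0))}"

definition h2_coeffs :: "(complex \<Rightarrow> 'a::complex_hilbert) \<Rightarrow> nat \<Rightarrow> 'a" where
  "h2_coeffs f = (THE c. sq_summable c \<and> (\<forall>z. norm z < 1 \<longrightarrow> f z = power_ser c z))"

definition h2_inner :: "(complex \<Rightarrow> 'a::complex_hilbert) \<Rightarrow> (complex \<Rightarrow> 'a) \<Rightarrow> complex" where
  "h2_inner f g = (\<Sum>n. cinner (h2_coeffs f n) (h2_coeffs g n))"

text \<open>Unitary operator H^2(E) \<rightarrow> H^2(F) (acting on the function space, only its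
restriction to H^2(E) matters).\<close>
definition h2_unitary :: "((complex \<Rightarrow> 'a::complex_hilbert) \<Rightarrow> (complex \<Rightarrow> 'b::complex_hilbert)) \<Rightarrow> bool" where
  "h2_unitary U \<longleftrightarrow>
     U ` hardy2 = hardy2 \<and>
     (\<forall>f\<in>hardy2. \<forall>g\<in>hardy2. U (\<lambda>z. f z + g z) = (\<lambda>z. U f z + U g z)) \<and>
     (\<forall>f\<in>hardy2. \<forall>c. U (\<lambda>z. c *\<^sub>C f z) = (\<lambda>z. c *\<^sub>C U f z)) \<and>
     (\<forall>f\<in>hardy2. \<forall>g\<in>hardy2. h2_inner (U f) (U g) = h2_inner f g)"

definition mult_op :: "(complex \<Rightarrow> 'a \<Rightarrow> 'a) \<Rightarrow> (complex \<Rightarrow> 'a::complex_hilbert) \<Rightarrow> complex \<Rightarrow> 'a" where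
  "mult_op \<Phi> f = (\<lambda>z. if norm z < 1 then \<Phi> z (f z) else 0)"

definition shift_op :: "(complex \<Rightarrow> 'a::complex_hilbert) \<Rightarrow> complex \<Rightarrow> 'a" where
  "shift_op = mult_op (\<lambda>z x. z *\<^sub>C x)"

definition op_poly :: "nat \<Rightarrow> (nat \<Rightarrow> 'a \<Rightarrow> 'a) \<Rightarrow> complex \<Rightarrow> 'a::complex_hilbert \<Rightarrow> 'a" where
  "op_poly p A = (\<lambda>z x. \<Sum>l\<le>p. (z ^ l) *\<^sub>C A l x)"

end

(*
  A unitary U : H^2(E) -> H^2(F) commuting with T_z preserves the orthogonal complement of the
  range of T_z, which consists of the constant functions; hence U e = W e for constants e and a
  unitary W : E -> F. Commuting with T_z gives U (z^n e) = z^n W e, and pairing with these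
  monomials shows that U acts on Taylor coefficients by W, i.e. U f = W o f. For such U the
  intertwining of T_Phi and T_Phi~ reduces, on constant functions, to W A_l = A~_l W for every
  Taylor coefficient; conversely every unitary W with these relations induces U f = W o f.
*)

theory Submission
  imports Defs
begin

section \<open>Complex inner product spaces\<close>

declare scaleC_one [simp]

context complex_hilbert
begin

lemma scaleC_zero_left [simp]: "0 *\<^sub>C x = 0"
proof -
  have "0 *\<^sub>C x = 0 *\<^sub>C x + 0 *\<^sub>C x"
    using scaleC_add_left [of 0 0 x] by simp
  then show ?thesis by simp
qed

lemma scaleC_zero_right [simp]: "a *\<^sub>C 0 = 0"
proof -
  have "a *\<^sub>C 0 = a *\<^sub>C 0 + a *\<^sub>C 0"
    using scaleC_add_right [of a 0 0] by simp
  then show ?thesis by simp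
qed

end

lemma cinner_zero_right [simp]: "cinner x 0 = 0"
  using cinner_add_right [of x 0 0] by simp

lemma cinner_zero_left [simp]: "cinner 0 x = 0"
  using cinner_commute [of x 0] by simp

lemma cinner_add_left: "cinner (x + y) z = cinner x z + cinner y z"
  by (simp add: cinner_commute [of _ z] cinner_add_right)

lemma cinner_minus_right: "cinner x (- y) = - cinner x y"
proof -
  have "cinner x y + cinner x (- y) = 0"
    using cinner_add_right [of x y "- y"] by simp
  then have "- cinner x y = cinner x (- y)"
    by (rule minus_unique)
  then show ?thesis by simp
qed

lemma cinner_minus_left: "cinner (- x) y = - cinner x y"
  by (simp add: cinner_commute [of _ y] cinner_minus_right)

lemma cinner_diff_right: "cinner x (y - z) = cinner x y - cinner x z"
  using cinner_add_right [of x y "- z"] by (simp add: cinner_minus_right)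

lemma cinner_diff_left: "cinner (x - y) z = cinner x z - cinner y z"
  using cinner_add_left [of x "- y" z] by (simp add: cinner_minus_left)

lemma cinner_scaleC_left: "cinner (a *\<^sub>C x) y = cnj a * cinner x y"
  by (simp add: cinner_commute [of _ y] cinner_scaleC_right)

lemma cinner_self_eq_0 [simp]: "cinner x x = 0 \<longleftrightarrow> x = 0"
  by (simp add: cinner_self_norm)

lemma cinner_eq_right:
  assumes "\<And>z. cinner z x = cinner z y"
  shows "x = y"
proof -
  have "cinner (x - y) (x - y) = 0"
    by (simp add: cinner_diff_right assms)
  then show ?thesis by simp
qed

lemma cinner_eq_left:
  assumes "\<And>z. cinner x z = cinner y z"
  shows "x = y"
  using assms by (intro cinner_eq_right) (metis cinner_commute)

lemma norm_scaleC: "norm (a *\<^sub>C x) = cmod a * norm x"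
proof -
  have "complex_of_real ((norm (a *\<^sub>C x))\<^sup>2) = cinner (a *\<^sub>C x) (a *\<^sub>C x)"
    by (simp add: cinner_self_norm)
  also have "\<dots> = cnj a * a * cinner x x"
    by (simp add: cinner_scaleC_left cinner_scaleC_right)
  also have "\<dots> = complex_of_real ((cmod a * norm x)\<^sup>2)"
    using complex_norm_square [of a] by (simp add: cinner_self_norm mult.commute power_mult_distrib)
  finally have "(norm (a *\<^sub>C x))\<^sup>2 = (cmod a * norm x)\<^sup>2"
    using of_real_eq_iff by blast
  then show ?thesis
    by (simp add: power2_eq_iff_nonneg)
qed

lemma norm_cinner_le: "cmod (cinner y x) \<le> norm y * norm x"
proof (cases "y = 0")
  case False
  define t where "t = cinner y x / complex_of_real ((norm y)\<^sup>2)"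
  define v where "v = x - t *\<^sub>C y"
  have ny: "complex_of_real ((norm y)\<^sup>2) \<noteq> 0"
    using False by simp
  have "cinner y v = cinner y x - t * cinner y y"
    by (simp add: v_def cinner_diff_right cinner_scaleC_right)
  also have "\<dots> = 0"
    using ny by (simp add: t_def cinner_self_norm)
  finally have yv: "cinner y v = 0" .
  then have vy: "cinner v y = 0"
    using cinner_commute [of v y] by simp
  \<comment> \<open>Pythagoras for the orthogonal decomposition x = v + t y\<close>
  have "x = v + t *\<^sub>C y"
    by (simp add: v_def)
  then have "cinner x x = cinner v v + cnj t * t * cinner y y"
    by (simp add: cinner_add_left cinner_add_right cinner_scaleC_left cinner_scaleC_right yv vy)
  also have "cnj t * t = complex_of_real ((cmod t)\<^sup>2)"
    using complex_norm_square [of t] by (simp add: mult.commute)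
  finally have "complex_of_real ((norm x)\<^sup>2) = complex_of_real ((norm v)\<^sup>2 + (cmod t * norm y)\<^sup>2)"
    by (simp add: cinner_self_norm power_mult_distrib)
  then have "(norm x)\<^sup>2 = (norm v)\<^sup>2 + (cmod t * norm y)\<^sup>2"
    using of_real_eq_iff by blast
  then have "(cmod t * norm y)\<^sup>2 \<le> (norm x)\<^sup>2"
    by simp
  then have le: "cmod t * norm y \<le> norm x"
    by (rule power2_le_imp_le) simp
  have "cmod (cinner y x) = cmod t * (norm y)\<^sup>2"
    using ny by (simp add: t_def norm_divide norm_power)
  also have "\<dots> = cmod t * norm y * norm y"
    by (simp add: power2_eq_square)
  also have "\<dots> \<le> norm x * norm y"
    using le by (rule mult_right_mono) simp
  finally show ?thesis
    by (simp add: mult.commute)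
qed simp

lemma bounded_linear_cinner_right: "bounded_linear (cinner y)"
proof (rule bounded_linear_intro [where K = "norm y"])
  show "cinner y (r *\<^sub>R x) = r *\<^sub>R cinner y x" for r x
    by (simp add: scaleR_scaleC cinner_scaleC_right scaleR_conv_of_real)
  show "norm (cinner y x) \<le> norm x * norm y" for x
    using norm_cinner_le [of y x] by (simp add: mult.commute)
qed (rule cinner_add_right)

lemma bounded_linear_scaleC: "bounded_linear (scaleC a)"
proof (rule bounded_linear_intro [where K = "cmod a"])
  show "a *\<^sub>C (r *\<^sub>R x) = r *\<^sub>R (a *\<^sub>C x)" for r x
    by (simp add: scaleR_scaleC scaleC_scaleC mult.commute)
  show "norm (a *\<^sub>C x) \<le> norm x * cmod a" for x
    by (simp add: norm_scaleC mult.commute)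
qed (rule scaleC_add_right)

section \<open>Isometries and unitaries\<close>

definition cisometry :: "('a::complex_hilbert \<Rightarrow> 'b::complex_hilbert) \<Rightarrow> bool" where
  "cisometry W \<longleftrightarrow> (\<forall>x y. cinner (W x) (W y) = cinner x y)"

lemma cisometry_cinner: "cisometry W \<Longrightarrow> cinner (W x) (W y) = cinner x y"
  by (simp add: cisometry_def)

lemma cisometry_norm:
  assumes "cisometry W"
  shows "norm (W x) = norm x"
proof -
  have "complex_of_real ((norm (W x))\<^sup>2) = complex_of_real ((norm x)\<^sup>2)"
    using cisometry_cinner [OF assms, of x x] by (simp only: cinner_self_norm)
  then have "(norm (W x))\<^sup>2 = (norm x)\<^sup>2"
    using of_real_eq_iff by blast
  then show ?thesis
    by (simp add: power2_eq_iff_nonneg)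
qed

text \<open>An inner-product preserving map is automatically linear: the defect vanishes because
  it is orthogonal to the range of the map, and it lies in the span of that range.\<close>

lemma cisometry_add:
  assumes W: "cisometry W"
  shows "W (x + y) = W x + W y"
proof -
  define d where "d = W (x + y) - W x - W y"
  have orth: "cinner d (W v) = 0" for v
    by (simp add: d_def cinner_diff_left cinner_add_left cisometry_cinner [OF W])
  have "cinner d d = cinner d (W (x + y)) - cinner d (W x) - cinner d (W y)"
    by (simp only: d_def cinner_diff_right)
  then have "d = 0"
    by (simp add: orth)
  then show ?thesis
    by (simp add: d_def diff_diff_eq)
qed

lemma cisometry_scaleC:
  assumes W: "cisometry W"
  shows "W (a *\<^sub>C x) = a *\<^sub>C W x"
proof -
  define d where "d = W (a *\<^sub>C x) - a *\<^sub>C W x"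
  have orth: "cinner d (W v) = 0" for v
    by (simp add: d_def cinner_diff_left cinner_scaleC_left cisometry_cinner [OF W])
  have "cinner d d = cinner d (W (a *\<^sub>C x)) - a * cinner d (W x)"
    by (simp only: d_def cinner_diff_right cinner_scaleC_right)
  then have "d = 0"
    by (simp add: orth)
  then show ?thesis
    by (simp add: d_def)
qed

lemma cisometry_zero: "cisometry W \<Longrightarrow> W 0 = 0"
  using cisometry_scaleC [of W 0 0] by simp

lemma cisometry_sum: "cisometry W \<Longrightarrow> W (\<Sum>i\<in>I. f i) = (\<Sum>i\<in>I. W (f i))"
  using sum_comp_morphism [of W f I] by (simp add: cisometry_zero cisometry_add comp_def)

lemma bounded_linear_cisometry:
  assumes W: "cisometry W"
  shows "bounded_linear W"
proof (rule bounded_linear_intro [where K = 1])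
  show "W (r *\<^sub>R x) = r *\<^sub>R W x" for r x
    by (simp add: scaleR_scaleC cisometry_scaleC [OF W])
qed (simp_all add: cisometry_add [OF W] cisometry_norm [OF W])

lemma unitary_iff_cisometry_surj: "unitary W \<longleftrightarrow> cisometry W \<and> surj W"
proof
  assume "cisometry W \<and> surj W"
  then show "unitary W"
    unfolding unitary_def bounded_clinear_def
    by (auto simp: cisometry_def cisometry_add cisometry_scaleC cisometry_norm intro!: exI [of _ 1])
qed (simp add: unitary_def cisometry_def)

lemma cadjoint_cisometry_left:
  assumes W: "cisometry W"
  shows "cadjoint W (W x) = x"
  unfolding cadjoint_def
proof (rule the_equality)
  fix x'
  assume "\<forall>z. cinner (W z) (W x) = cinner z x'"
  then show "x' = x"
    by (intro cinner_eq_right) (simp add: cisometry_cinner [OF W])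
qed (simp add: cisometry_cinner [OF W])

lemma unitary_cadjoint_right:
  assumes "unitary W"
  shows "W (cadjoint W y) = y"
proof -
  obtain x where "y = W x"
    using assms unfolding unitary_def by (meson surjD)
  then show ?thesis
    using assms by (simp add: cadjoint_cisometry_left unitary_iff_cisometry_surj)
qed

lemma cisometry_cadjoint:
  assumes "unitary W"
  shows "cisometry (cadjoint W)"
  unfolding cisometry_def
proof (intro allI)
  fix x y
  have "cinner (cadjoint W x) (cadjoint W y) = cinner (W (cadjoint W x)) (W (cadjoint W y))"
    using assms by (simp add: cisometry_cinner unitary_iff_cisometry_surj)
  then show "cinner (cadjoint W x) (cadjoint W y) = cinner x y"
    using assms by (simp add: unitary_cadjoint_right)
qed

lemma unitary_conj_eq_iff:
  assumes "unitary W"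
  shows "W \<circ> A \<circ> cadjoint W = B \<longleftrightarrow> (\<forall>x. W (A x) = B (W x))"
proof -
  have "(\<forall>y. W (A (cadjoint W y)) = B y) \<longleftrightarrow> (\<forall>x. W (A (cadjoint W (W x))) = B (W x))"
    using assms unfolding unitary_def by (metis surjD)
  then show ?thesis
    using assms by (simp add: fun_eq_iff unitary_iff_cisometry_surj cadjoint_cisometry_left)
qed

section \<open>Power series on the disc and the Hardy space\<close>

lemma sq_summable_norm_le:
  assumes "sq_summable c"
  shows "norm (c n) \<le> sqrt (\<Sum>m. (norm (c m))\<^sup>2)"
proof (rule real_le_rsqrt)
  show "(norm (c n))\<^sup>2 \<le> (\<Sum>m. (norm (c m))\<^sup>2)"
    using sum_le_suminf [of "\<lambda>m. (norm (c m))\<^sup>2" "{n}"] assms by (simp add: sq_summable_def)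
qed

lemma sums_power_ser:
  assumes c: "sq_summable c" and z: "cmod z < 1"
  shows "(\<lambda>n. z ^ n *\<^sub>C c n) sums power_ser c z"
proof -
  define M where "M = sqrt (\<Sum>m. (norm (c m))\<^sup>2)"
  have "summable (\<lambda>n. z ^ n *\<^sub>C c n)"
  proof (rule summable_comparison_test' [where g = "\<lambda>n. M * cmod z ^ n" and N = 0])
    show "summable (\<lambda>n. M * cmod z ^ n)"
      using z by (simp add: summable_mult)
    show "norm (z ^ n *\<^sub>C c n) \<le> M * cmod z ^ n" for n
      using mult_left_mono [OF sq_summable_norm_le [OF c, of n], of "cmod z ^ n"]
      by (simp add: M_def norm_scaleC norm_power mult.commute)
  qed
  then show ?thesis
    unfolding power_ser_def by (rule summable_sums)
qed

lemma powser_sums_zero_imp_coeff_0: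
  fixes a :: "nat \<Rightarrow> complex"
  assumes "\<And>x. x \<noteq> 0 \<Longrightarrow> cmod x < 1 \<Longrightarrow> (\<lambda>n. a n * x ^ n) sums 0"
  shows "a 0 = 0"
proof -
  have "((\<lambda>x::complex. 0) \<longlongrightarrow> a 0) (at 0)"
    using powser_limit_0_strong [where s = 1 and a = a and f = "\<lambda>x. 0"] assms by simp
  then have "0 = a 0"
    by (rule LIM_const_eq)
  then show ?thesis by simp
qed

lemma powser_sums_zero_imp_coeffs_zero:
  fixes a :: "nat \<Rightarrow> complex"
  assumes "\<And>x. x \<noteq> 0 \<Longrightarrow> cmod x < 1 \<Longrightarrow> (\<lambda>n. a n * x ^ n) sums 0"
  shows "a k = 0"
  using assms
proof (induction k arbitrary: a)
  case 0
  then show ?case by (rule powser_sums_zero_imp_coeff_0)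
next
  case (Suc k)
  have "(\<lambda>n. a (Suc n) * x ^ n) sums 0" if x: "x \<noteq> 0" "cmod x < 1" for x
  proof -
    have "(\<lambda>n. a (Suc n) * x ^ Suc n) sums 0"
      using sums_Suc_iff [where f = "\<lambda>n. a n * x ^ n" and s = 0] Suc.prems [OF x]
        powser_sums_zero_imp_coeff_0 [OF Suc.prems] by simp
    then have "(\<lambda>n. a (Suc n) * x ^ Suc n / x) sums (0 / x)"
      by (rule sums_divide)
    then show ?thesis
      using x by simp
  qed
  then show ?case
    by (rule Suc.IH)
qed

lemma power_ser_unique:
  assumes c: "sq_summable c" and d: "sq_summable d"
    and eq: "\<And>z. cmod z < 1 \<Longrightarrow> power_ser c z = power_ser d z"
  shows "c = d"
proof
  fix k
  have "cinner y (c k) - cinner y (d k) = 0" for y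
  proof (rule powser_sums_zero_imp_coeffs_zero [where a = "\<lambda>n. cinner y (c n) - cinner y (d n)"])
    fix x :: complex
    assume x: "x \<noteq> 0" "cmod x < 1"
    have "(\<lambda>n. cinner y (x ^ n *\<^sub>C c n) - cinner y (x ^ n *\<^sub>C d n))
        sums (cinner y (power_ser c x) - cinner y (power_ser d x))"
      by (intro sums_diff bounded_linear.sums [OF bounded_linear_cinner_right]
          sums_power_ser c d x(2))
    then show "(\<lambda>n. (cinner y (c n) - cinner y (d n)) * x ^ n) sums 0"
      by (simp add: eq x(2) cinner_scaleC_right algebra_simps)
  qed
  then show "c k = d k"
    by (intro cinner_eq_right) simp
qed

definition disc_power_ser :: "(nat \<Rightarrow> 'a::complex_hilbert) \<Rightarrow> complex \<Rightarrow> 'a" where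
  "disc_power_ser c = (\<lambda>z. if cmod z < 1 then power_ser c z else 0)"

lemma hardy2_iff: "f \<in> hardy2 \<longleftrightarrow> (\<exists>c. sq_summable c \<and> f = disc_power_ser c)"
  by (simp add: hardy2_def disc_power_ser_def fun_eq_iff)

lemma disc_power_ser_in_hardy2: "sq_summable c \<Longrightarrow> disc_power_ser c \<in> hardy2"
  by (auto simp: hardy2_iff)

lemma h2_coeffs_disc_power_ser:
  assumes c: "sq_summable c"
  shows "h2_coeffs (disc_power_ser c) = c"
  unfolding h2_coeffs_def
proof (rule the_equality)
  fix d
  assume "sq_summable d \<and> (\<forall>z. cmod z < 1 \<longrightarrow> disc_power_ser c z = power_ser d z)"
  then show "d = c"
    using c by (intro power_ser_unique) (auto simp: disc_power_ser_def)
qed (simp add: c disc_power_ser_def)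

lemma disc_power_ser_inject:
  "sq_summable c \<Longrightarrow> sq_summable d \<Longrightarrow> disc_power_ser c = disc_power_ser d \<longleftrightarrow> c = d"
  by (metis h2_coeffs_disc_power_ser)

lemma hardy2_coeffs:
  assumes "f \<in> hardy2"
  shows "sq_summable (h2_coeffs f)" and "disc_power_ser (h2_coeffs f) = f"
  using assms by (auto simp: hardy2_iff h2_coeffs_disc_power_ser)

lemma sq_summable_finite_support:
  assumes "\<And>n. n > N \<Longrightarrow> c n = 0"
  shows "sq_summable c"
  unfolding sq_summable_def by (rule summable_finite [of "{..N}"]) (auto simp: assms)

lemma power_ser_finite_support:
  assumes "\<And>n. n > N \<Longrightarrow> c n = 0"
  shows "power_ser c z = (\<Sum>n\<le>N. z ^ n *\<^sub>C c n)"
  unfolding power_ser_def by (rule sums_unique [symmetric], rule sums_finite) (auto simp: assms)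

definition h2_monomial :: "nat \<Rightarrow> 'a::complex_hilbert \<Rightarrow> complex \<Rightarrow> 'a" where
  "h2_monomial n e = disc_power_ser (\<lambda>m. if m = n then e else 0)"

lemma sq_summable_single: "sq_summable (\<lambda>m. if m = n then e else 0)"
  by (rule sq_summable_finite_support [of n]) simp

lemma h2_monomial_apply: "h2_monomial n e z = (if cmod z < 1 then z ^ n *\<^sub>C e else 0)"
proof -
  have "(\<Sum>m\<le>n. z ^ m *\<^sub>C (if m = n then e else 0)) = z ^ n *\<^sub>C e"
    by (simp add: if_distrib [of "scaleC _"] cong: if_cong)
  then show ?thesis
    by (simp add: h2_monomial_def disc_power_ser_def power_ser_finite_support [of n])
qed

lemma h2_monomial_in_hardy2: "h2_monomial n e \<in> hardy2"
  by (simp add: h2_monomial_def disc_power_ser_in_hardy2 sq_summable_single)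

lemma h2_coeffs_h2_monomial: "h2_coeffs (h2_monomial n e) = (\<lambda>m. if m = n then e else 0)"
  by (simp add: h2_monomial_def h2_coeffs_disc_power_ser sq_summable_single)

lemma h2_inner_h2_monomial_right: "h2_inner f (h2_monomial n e) = cinner (h2_coeffs f n) e"
proof -
  have "(\<lambda>m. cinner (h2_coeffs f m) (h2_coeffs (h2_monomial n e) m))
      = (\<lambda>m. if m = n then cinner (h2_coeffs f m) e else 0)"
    by (simp add: h2_coeffs_h2_monomial fun_eq_iff)
  then show ?thesis
    using sums_single [of n "\<lambda>m. cinner (h2_coeffs f m) e"] by (simp add: h2_inner_def sums_iff)
qed

lemma shift_op_h2_monomial: "shift_op (h2_monomial n e) = h2_monomial (Suc n) e"
  by (simp add: fun_eq_iff shift_op_def mult_op_def h2_monomial_apply scaleC_scaleC)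

lemma sq_summable_shift: "sq_summable c \<Longrightarrow> sq_summable (case_nat 0 c)"
  unfolding sq_summable_def by (subst summable_Suc_iff [symmetric]) simp

lemma shift_op_disc_power_ser:
  assumes c: "sq_summable c"
  shows "shift_op (disc_power_ser c) = disc_power_ser (case_nat 0 c)"
proof -
  have "power_ser (case_nat 0 c) z = z *\<^sub>C power_ser c z" if z: "cmod z < 1" for z
  proof -
    have "(\<lambda>n. z *\<^sub>C (z ^ n *\<^sub>C c n)) sums (z *\<^sub>C power_ser c z)"
      by (rule bounded_linear.sums [OF bounded_linear_scaleC sums_power_ser [OF c z]])
    then have "(\<lambda>n. z ^ Suc n *\<^sub>C case_nat 0 c (Suc n)) sums (z *\<^sub>C power_ser c z)"
      by (simp add: scaleC_scaleC)
    then have "(\<lambda>n. z ^ n *\<^sub>C case_nat 0 c n) sums (z *\<^sub>C power_ser c z + z ^ 0 *\<^sub>C case_nat 0 c 0)"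
      by (rule sums_Suc_iff [THEN iffD1])
    then have "(\<lambda>n. z ^ n *\<^sub>C case_nat 0 c n) sums (z *\<^sub>C power_ser c z)"
      by simp
    then show ?thesis
      unfolding power_ser_def by (rule sums_unique [symmetric])
  qed
  then show ?thesis
    by (simp add: fun_eq_iff shift_op_def mult_op_def disc_power_ser_def)
qed

lemma shift_op_in_hardy2: "f \<in> hardy2 \<Longrightarrow> shift_op f \<in> hardy2"
  by (metis hardy2_iff shift_op_disc_power_ser sq_summable_shift)

lemma h2_coeffs_shift_op: "f \<in> hardy2 \<Longrightarrow> h2_coeffs (shift_op f) = case_nat 0 (h2_coeffs f)"
  by (auto simp: hardy2_iff shift_op_disc_power_ser sq_summable_shift h2_coeffs_disc_power_ser)

lemma hardy2_orth_shift_iff_const: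
  assumes f: "f \<in> hardy2"
  shows "(\<forall>h\<in>hardy2. h2_inner f (shift_op h) = 0) \<longleftrightarrow> (\<exists>e. f = h2_monomial 0 e)"
proof
  assume orth: "\<forall>h\<in>hardy2. h2_inner f (shift_op h) = 0"
  let ?c = "h2_coeffs f"
  have "?c (Suc k) = 0" for k
  proof -
    have "h2_inner f (shift_op (h2_monomial k (?c (Suc k)))) = 0"
      using orth h2_monomial_in_hardy2 by blast
    then show ?thesis
      by (simp add: shift_op_h2_monomial h2_inner_h2_monomial_right)
  qed
  then have "?c = (\<lambda>m. if m = 0 then ?c 0 else 0)"
    by (auto simp: fun_eq_iff gr0_conv_Suc)
  then have "f = h2_monomial 0 (?c 0)"
    using hardy2_coeffs(2) [OF f] by (metis h2_monomial_def)
  then show "\<exists>e. f = h2_monomial 0 e" ..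
next
  assume "\<exists>e. f = h2_monomial 0 e"
  then obtain e where e: "f = h2_monomial 0 e" ..
  show "\<forall>h\<in>hardy2. h2_inner f (shift_op h) = 0"
  proof
    fix h :: "complex \<Rightarrow> 'a"
    assume "h \<in> hardy2"
    then have "(\<lambda>m. cinner (h2_coeffs f m) (h2_coeffs (shift_op h) m)) = (\<lambda>m. 0)"
      by (auto simp: e fun_eq_iff h2_coeffs_h2_monomial h2_coeffs_shift_op split: nat.split)
    then show "h2_inner f (shift_op h) = 0"
      by (simp add: h2_inner_def)
  qed
qed

section \<open>Unitaries commuting with the shift\<close>

lemma sq_summable_compose: "cisometry W \<Longrightarrow> sq_summable c \<Longrightarrow> sq_summable (\<lambda>n. W (c n))"
  by (simp add: sq_summable_def cisometry_norm)

lemma disc_power_ser_compose: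
  assumes W: "cisometry W" and c: "sq_summable c"
  shows "(\<lambda>z. W (disc_power_ser c z)) = disc_power_ser (\<lambda>n. W (c n))"
proof -
  have "power_ser (\<lambda>n. W (c n)) z = W (power_ser c z)" if z: "cmod z < 1" for z
  proof -
    have "(\<lambda>n. W (z ^ n *\<^sub>C c n)) sums W (power_ser c z)"
      by (rule bounded_linear.sums [OF bounded_linear_cisometry [OF W] sums_power_ser [OF c z]])
    then show ?thesis
      unfolding power_ser_def by (simp add: cisometry_scaleC [OF W] sums_iff)
  qed
  then show ?thesis
    by (simp add: fun_eq_iff disc_power_ser_def cisometry_zero [OF W])
qed

lemma compose_in_hardy2: "cisometry W \<Longrightarrow> f \<in> hardy2 \<Longrightarrow> (\<lambda>z. W (f z)) \<in> hardy2"
  by (metis hardy2_iff disc_power_ser_compose sq_summable_compose)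

lemma h2_coeffs_compose:
  "cisometry W \<Longrightarrow> f \<in> hardy2 \<Longrightarrow> h2_coeffs (\<lambda>z. W (f z)) = (\<lambda>n. W (h2_coeffs f n))"
  by (auto simp: hardy2_iff disc_power_ser_compose sq_summable_compose h2_coeffs_disc_power_ser)

lemma h2_monomial_compose:
  "cisometry W \<Longrightarrow> (\<lambda>z. W (h2_monomial n e z)) = h2_monomial n (W e)"
  by (simp add: fun_eq_iff h2_monomial_apply cisometry_scaleC cisometry_zero)

lemma shift_op_compose: "cisometry W \<Longrightarrow> (\<lambda>z. W (shift_op f z)) = shift_op (\<lambda>z. W (f z))"
  by (simp add: fun_eq_iff shift_op_def mult_op_def cisometry_scaleC cisometry_zero)

lemma h2_unitary_compose:
  assumes W: "unitary W"
  shows "h2_unitary (\<lambda>f z. W (f z))"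
proof -
  have iso: "cisometry W"
    using W by (simp add: unitary_iff_cisometry_surj)
  have "g \<in> (\<lambda>f z. W (f z)) ` hardy2" if g: "g \<in> hardy2" for g
  proof
    show "g = (\<lambda>z. W (cadjoint W (g z)))"
      by (simp add: unitary_cadjoint_right [OF W])
    show "(\<lambda>z. cadjoint W (g z)) \<in> hardy2"
      by (rule compose_in_hardy2 [OF cisometry_cadjoint [OF W] g])
  qed
  then have "(\<lambda>f z. W (f z)) ` hardy2 = hardy2"
    by (auto intro: compose_in_hardy2 [OF iso])
  then show ?thesis
    by (simp add: h2_unitary_def h2_inner_def h2_coeffs_compose [OF iso] cisometry_cinner [OF iso]
        cisometry_add [OF iso] cisometry_scaleC [OF iso])
qed

lemma mult_op_op_poly_compose:
  assumes W: "cisometry W" and AB: "\<And>l x. l \<le> p \<Longrightarrow> W (A l x) = B l (W x)"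
  shows "(\<lambda>z. W (mult_op (op_poly p A) f z)) = mult_op (op_poly p B) (\<lambda>z. W (f z))"
  by (simp add: fun_eq_iff mult_op_def op_poly_def cisometry_sum [OF W] cisometry_scaleC [OF W]
      cisometry_zero [OF W] AB)

lemma mult_op_op_poly_const:
  "mult_op (op_poly p A) (h2_monomial 0 e) = disc_power_ser (\<lambda>l. if l \<le> p then A l e else 0)"
  by (simp add: fun_eq_iff mult_op_def op_poly_def h2_monomial_apply disc_power_ser_def
      power_ser_finite_support [of p])

lemma h2_unitary_orth_shift_iff:
  assumes U: "h2_unitary U" and S: "\<forall>f\<in>hardy2. U (shift_op f) = shift_op (U f)"
    and f: "f \<in> hardy2"
  shows "(\<forall>h\<in>hardy2. h2_inner (U f) (shift_op h) = 0) \<longleftrightarrow> (\<forall>h\<in>hardy2. h2_inner f (shift_op h) = 0)"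
proof -
  have inner: "h2_inner (U f) (shift_op (U h)) = h2_inner f (shift_op h)" if h: "h \<in> hardy2" for h
  proof -
    have "h2_inner (U f) (shift_op (U h)) = h2_inner (U f) (U (shift_op h))"
      using S h by simp
    also have "\<dots> = h2_inner f (shift_op h)"
      using U f shift_op_in_hardy2 [OF h] by (simp add: h2_unitary_def)
    finally show ?thesis .
  qed
  have "U ` hardy2 = hardy2"
    using U by (simp add: h2_unitary_def)
  then have "(\<forall>h\<in>hardy2. h2_inner (U f) (shift_op h) = 0)
      \<longleftrightarrow> (\<forall>h\<in>U ` hardy2. h2_inner (U f) (shift_op h) = 0)"
    by simp
  also have "\<dots> \<longleftrightarrow> (\<forall>h\<in>hardy2. h2_inner (U f) (shift_op (U h)) = 0)"
    by simp
  also have "\<dots> \<longleftrightarrow> (\<forall>h\<in>hardy2. h2_inner f (shift_op h) = 0)"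
    using inner by simp
  finally show ?thesis .
qed

lemma h2_unitary_commuting_shift_const:
  assumes U: "h2_unitary U" and S: "\<forall>f\<in>hardy2. U (shift_op f) = shift_op (U f)"
  obtains W where "cisometry W" and "surj W" and "\<And>e. U (h2_monomial 0 e) = h2_monomial 0 (W e)"
proof
  have im: "U ` hardy2 = hardy2" and inner: "\<forall>f\<in>hardy2. \<forall>g\<in>hardy2. h2_inner (U f) (U g) = h2_inner f g"
    using U by (simp_all add: h2_unitary_def)
  have const_iff: "(\<exists>e. U g = h2_monomial 0 e) \<longleftrightarrow> (\<exists>e. g = h2_monomial 0 e)" if g: "g \<in> hardy2" for g
    using hardy2_orth_shift_iff_const [of g] hardy2_orth_shift_iff_const [of "U g"]
      h2_unitary_orth_shift_iff [OF U S g] g im by blast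
  define W where "W e = U (h2_monomial 0 e) 0" for e
  show UW: "U (h2_monomial 0 e) = h2_monomial 0 (W e)" for e
  proof -
    obtain e' where e': "U (h2_monomial 0 e) = h2_monomial 0 e'"
      using const_iff h2_monomial_in_hardy2 by blast
    then have "W e = e'"
      by (simp add: W_def h2_monomial_apply)
    then show ?thesis
      using e' by simp
  qed
  show "cisometry W"
    unfolding cisometry_def
  proof (intro allI)
    fix e e'
    have "h2_inner (U (h2_monomial 0 e)) (U (h2_monomial 0 e')) = h2_inner (h2_monomial 0 e) (h2_monomial 0 e')"
      using inner h2_monomial_in_hardy2 by blast
    then show "cinner (W e) (W e') = cinner e e'"
      by (simp add: UW h2_inner_h2_monomial_right h2_coeffs_h2_monomial)
  qed
  have "y \<in> range W" for y
  proof -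
    obtain g where g: "g \<in> hardy2" "U g = h2_monomial 0 y"
      using im h2_monomial_in_hardy2 by (metis imageE)
    then obtain e where "g = h2_monomial 0 e"
      using const_iff by blast
    then have "h2_monomial 0 y 0 = h2_monomial 0 (W e) 0"
      using g(2) UW by simp
    then show ?thesis
      by (simp add: h2_monomial_apply)
  qed
  then show "surj W"
    by blast
qed

lemma h2_unitary_commuting_shift_eq_compose:
  assumes U: "h2_unitary U" and S: "\<forall>f\<in>hardy2. U (shift_op f) = shift_op (U f)"
  obtains W where "unitary W" and "\<forall>f\<in>hardy2. U f = (\<lambda>z. W (f z))"
proof -
  obtain W where W: "cisometry W" "surj W" and const: "\<And>e. U (h2_monomial 0 e) = h2_monomial 0 (W e)"
    using h2_unitary_commuting_shift_const [OF U S] by blast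
  have inner: "\<forall>f\<in>hardy2. \<forall>g\<in>hardy2. h2_inner (U f) (U g) = h2_inner f g"
    using U by (simp add: h2_unitary_def)
  have mono: "U (h2_monomial n e) = h2_monomial n (W e)" for n e
  proof (induction n)
    case (Suc n)
    then show ?case
      using S h2_monomial_in_hardy2 by (metis shift_op_h2_monomial)
  qed (rule const)
  have coeffs: "h2_coeffs (U f) n = W (h2_coeffs f n)" if f: "f \<in> hardy2" for f n
  proof (rule cinner_eq_left)
    fix z
    obtain y where z: "z = W y"
      using W(2) by (meson surjD)
    have "cinner (h2_coeffs (U f) n) (W y) = h2_inner (U f) (U (h2_monomial n y))"
      by (simp add: mono h2_inner_h2_monomial_right)
    also have "\<dots> = h2_inner f (h2_monomial n y)"
      using inner f h2_monomial_in_hardy2 by blast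
    also have "\<dots> = cinner (h2_coeffs f n) y"
      by (rule h2_inner_h2_monomial_right)
    finally show "cinner (h2_coeffs (U f) n) z = cinner (W (h2_coeffs f n)) z"
      by (simp add: z cisometry_cinner [OF W(1)])
  qed
  have "U f = (\<lambda>z. W (f z))" if f: "f \<in> hardy2" for f
  proof -
    have "U f \<in> hardy2"
      using U f by (auto simp: h2_unitary_def)
    then have "U f = disc_power_ser (\<lambda>n. W (h2_coeffs f n))"
      by (metis hardy2_coeffs(2) coeffs [OF f] ext)
    also have "\<dots> = (\<lambda>z. W (f z))"
      using disc_power_ser_compose [OF W(1) hardy2_coeffs(1) [OF f]] hardy2_coeffs(2) [OF f] by simp
    finally show ?thesis .
  qed
  then show ?thesis
    using W that unitary_iff_cisometry_surj by blast
qed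

lemma op_poly_coeffs_intertwined:
  assumes W: "cisometry W" and UW: "\<forall>f\<in>hardy2. U f = (\<lambda>z. W (f z))"
    and UAB: "\<forall>f\<in>hardy2. U (mult_op (op_poly p A) f) = mult_op (op_poly p B) (U f)"
    and l: "l \<le> p"
  shows "W (A l x) = B l (W x)"
proof -
  let ?coeffs = "\<lambda>C y l. if l \<le> p then C l y else 0"
  have sqA: "sq_summable (?coeffs A x)" and sqB: "sq_summable (?coeffs B (W x))"
    by (rule sq_summable_finite_support [of p], simp)+
  have "disc_power_ser (\<lambda>l. W (?coeffs A x l)) = (\<lambda>z. W (mult_op (op_poly p A) (h2_monomial 0 x) z))"
    unfolding mult_op_op_poly_const by (rule disc_power_ser_compose [OF W sqA, symmetric])
  also have "\<dots> = U (mult_op (op_poly p A) (h2_monomial 0 x))"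
    using UW disc_power_ser_in_hardy2 [OF sqA] by (simp add: mult_op_op_poly_const)
  also have "\<dots> = mult_op (op_poly p B) (U (h2_monomial 0 x))"
    using UAB h2_monomial_in_hardy2 by blast
  also have "\<dots> = disc_power_ser (?coeffs B (W x))"
    using UW h2_monomial_in_hardy2 [of 0 x] by (simp add: h2_monomial_compose [OF W] mult_op_op_poly_const)
  finally have "(\<lambda>l. W (?coeffs A x l)) = ?coeffs B (W x)"
    by (simp add: disc_power_ser_inject sqB sq_summable_compose [OF W sqA])
  then have "W (?coeffs A x l) = ?coeffs B (W x) l"
    by (rule fun_cong)
  then show ?thesis
    using l by simp
qed

lemma coeff_equivalence_if_h2_equivalence:
  assumes U: "h2_unitary U"
    and mult: "\<forall>i\<in>I. \<forall>f\<in>hardy2. U (mult_op (op_poly p (A i)) f) = mult_op (op_poly p (B i)) (U f)"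
    and shift: "\<forall>f\<in>hardy2. U (shift_op f) = shift_op (U f)"
  shows "\<exists>W. unitary W \<and> (\<forall>i\<in>I. \<forall>l\<le>p. W \<circ> A i l \<circ> cadjoint W = B i l)"
proof -
  obtain W where W: "unitary W" and UW: "\<forall>f\<in>hardy2. U f = (\<lambda>z. W (f z))"
    using h2_unitary_commuting_shift_eq_compose [OF U shift] by blast
  have "W (A i l x) = B i l (W x)" if "i \<in> I" "l \<le> p" for i l x
    using W mult that
    by (intro op_poly_coeffs_intertwined [OF _ UW]) (simp_all add: unitary_iff_cisometry_surj)
  then show ?thesis
    using W by (auto simp: unitary_conj_eq_iff)
qed

lemma h2_equivalence_if_coeff_equivalence:
  assumes W: "unitary W" and conj: "\<forall>i\<in>I. \<forall>l\<le>p. W \<circ> A i l \<circ> cadjoint W = B i l"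
  shows "\<exists>U. h2_unitary U \<and>
    (\<forall>i\<in>I. \<forall>f\<in>hardy2. U (mult_op (op_poly p (A i)) f) = mult_op (op_poly p (B i)) (U f)) \<and>
    (\<forall>f\<in>hardy2. U (shift_op f) = shift_op (U f))"
proof -
  have iso: "cisometry W"
    using W by (simp add: unitary_iff_cisometry_surj)
  have "\<forall>i\<in>I. \<forall>f. (\<lambda>z. W (mult_op (op_poly p (A i)) f z)) = mult_op (op_poly p (B i)) (\<lambda>z. W (f z))"
    using conj by (simp add: mult_op_op_poly_compose [OF iso] unitary_conj_eq_iff [OF W])
  then show ?thesis
    using h2_unitary_compose [OF W] shift_op_compose [OF iso] by blast
qed

theorem theorem3p7:
  fixes p n :: nat
    and A :: "nat \<Rightarrow> nat \<Rightarrow> 'e::complex_hilbert \<Rightarrow> 'e"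
    and At :: "nat \<Rightarrow> nat \<Rightarrow> 'f::complex_hilbert \<Rightarrow> 'f"
  assumes "p \<ge> 1" and "n > 1"
    and "\<And>i l. i \<in> {1..n-1} \<Longrightarrow> l \<le> p \<Longrightarrow> bounded_clinear (A i l)"
    and "\<And>i l. i \<in> {1..n-1} \<Longrightarrow> l \<le> p \<Longrightarrow> bounded_clinear (At i l)"
  shows "(\<exists>U :: (complex \<Rightarrow> 'e) \<Rightarrow> (complex \<Rightarrow> 'f).
            h2_unitary U \<and>
            (\<forall>i\<in>{1..n-1}. \<forall>f\<in>hardy2.
               U (mult_op (op_poly p (A i)) f) = mult_op (op_poly p (At i)) (U f)) \<and>
            (\<forall>f\<in>hardy2. U (shift_op f) = shift_op (U f)))
     \<longleftrightarrow>
     (\<exists>W :: 'e \<Rightarrow> 'f. unitary W \<and>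
        (\<forall>i\<in>{1..n-1}. \<forall>l\<le>p. W \<circ> A i l \<circ> cadjoint W = At i l))"
  by (intro iffI; elim exE conjE)
    (rule coeff_equivalence_if_h2_equivalence h2_equivalence_if_coeff_equivalence; assumption)+

end
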